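(* Let $A>0$ and let $\tilde n,\tilde m$ be probability measures on $\mathbb R$ with finite fourth moment such that $\int y\,\tilde n(dy)=\int y\,\tilde m(dy)$. Then \[W_4\big(T(\tilde n),T(\tilde m)\big)\leq\frac{1}{2^{1/4}}\,W_4(\tilde n,\tilde m).\]
   Context: $\Gamma_{A/2}(y):=\frac{1}{\sqrt{2\pi A}}e^{-|y|^2/A}$ (Gaussian density of variance $A/2$). For a probability measure $\tilde n$ on $\mathbb R$, $T(\tilde n)$ is the probability density \[T(\tilde n)(y):=\int\!\!\int\Gamma_{A/2}\Big(y-\frac{y_*+y_*'}{2}\Big)\,\tilde n(dy_* )\,\tilde n(dy_*').\] $W_4$ is the Wasserstein distance of order 4: $W_4(\mu,\nu)=\big(\inf_\pi\int|x-y|^4\,d\pi(x,y)\big)^{1/4}$, infimum over probability measures $\pi$ on $\mathbb R^2$ with marginals $\mu$ and $\nu$. *)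

theory Defs
  imports "HOL-Probability.Probability"
begin

definition gauss_half :: "real \<Rightarrow> real \<Rightarrow> real" where
  "gauss_half A y = 1 / sqrt (pi * A) * exp (- (y\<^sup>2) / A)"

definition T_op :: "real \<Rightarrow> real measure \<Rightarrow> real measure" where
  "T_op A n = density lborel
     (\<lambda>y. \<integral>\<^sup>+ a. \<integral>\<^sup>+ b. ennreal (gauss_half A (y - (a + b) / 2)) \<partial>n \<partial>n)"

definition couplings :: "real measure \<Rightarrow> real measure \<Rightarrow> (real \<times> real) measure set" where
  "couplings \<mu> \<nu> = {\<pi>. prob_space \<pi> \<and> sets \<pi> = sets (borel \<Otimes>\<^sub>M borel) \<and>
      distr \<pi> borel fst = \<mu> \<and> distr \<pi> borel snd = \<nu>}"

definition W4_cost :: "real measure \<Rightarrow> real measure \<Rightarrow> ennreal" where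
  "W4_cost \<mu> \<nu> = (INF \<pi>\<in>couplings \<mu> \<nu>. \<integral>\<^sup>+ p. ennreal ((fst p - snd p) ^ 4) \<partial>\<pi>)"

definition W4 :: "real measure \<Rightarrow> real measure \<Rightarrow> real" where
  "W4 \<mu> \<nu> = (enn2real (W4_cost \<mu> \<nu>)) powr (1/4)"

end

theory Submission
  imports Defs
begin

text \<open>
  \<open>T(n)\<close> is the law of \<open>(X + X')/2 + G\<close> with \<open>X, X'\<close> independent of law \<open>n\<close> and \<open>G\<close> an independent
  Gaussian. Given a coupling \<open>(X, Y)\<close> of \<open>n\<close> and \<open>m\<close>, take an independent copy \<open>(X', Y')\<close> and
  use the same \<open>G\<close> on both sides: \<open>((X + X')/2 + G, (Y + Y')/2 + G)\<close> couples \<open>T(n)\<close> and \<open>T(m)\<close>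
  with cost \<open>E ((D + D')/2)\<^sup>4\<close>, where \<open>D = X - Y\<close>. Equal means give \<open>E D = 0\<close>, so
  \<open>E (D + D')\<^sup>4 = 2 E D\<^sup>4 + 6 (E D\<^sup>2)\<^sup>2 \<le> 8 E D\<^sup>4\<close>, i.e. the cost is at most half that of the
  original coupling.
\<close>

definition gauss_measure :: "real \<Rightarrow> real measure" where
  "gauss_measure A = density lborel (\<lambda>x. ennreal (gauss_half A x))"

lemma gauss_half_eq_normal_density: "A > 0 \<Longrightarrow> gauss_half A x = normal_density 0 (sqrt (A / 2)) x"
  by (simp add: gauss_half_def normal_density_def)

lemma borel_measurable_gauss_half[measurable]: "gauss_half A \<in> borel_measurable borel"
  unfolding gauss_half_def by measurable

lemma sets_gauss_measure[simp, measurable_cong]: "sets (gauss_measure A) = sets borel"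
  by (simp add: gauss_measure_def)

lemma prob_space_gauss_measure:
  assumes "A > 0" shows "prob_space (gauss_measure A)"
  unfolding gauss_measure_def gauss_half_eq_normal_density[OF assms]
  using assms by (simp add: prob_space_normal_density)

lemma convolution_gauss_measure:
  assumes A: "A > 0" and "finite_measure \<mu>" and S[measurable_cong]: "sets \<mu> = sets borel"
  shows "(\<mu> \<star> gauss_measure A) = density lborel (\<lambda>y. \<integral>\<^sup>+c. ennreal (gauss_half A (y - c)) \<partial>\<mu>)"
proof (rule measure_eqI)
  interpret G: prob_space "gauss_measure A" by (rule prob_space_gauss_measure[OF A])
  interpret M: finite_measure \<mu> by fact
  interpret pair_sigma_finite lborel \<mu> by unfold_locales
  fix S assume "S \<in> sets (\<mu> \<star> gauss_measure A)"
  then have [measurable]: "S \<in> sets borel" by simp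
  have "emeasure (\<mu> \<star> gauss_measure A) S
      = (\<integral>\<^sup>+c. \<integral>\<^sup>+g. indicator S (c + g) \<partial>gauss_measure A \<partial>\<mu>)"
    by (rule convolution_emeasure') (simp_all add: G.finite_measure_axioms M.finite_measure_axioms S)
  also have "\<dots> = (\<integral>\<^sup>+c. \<integral>\<^sup>+y. ennreal (gauss_half A (y - c)) * indicator S y \<partial>lborel \<partial>\<mu>)"
  proof (rule nn_integral_cong)
    fix c :: real
    have "(\<integral>\<^sup>+g. indicator S (c + g) \<partial>gauss_measure A)
        = (\<integral>\<^sup>+g. ennreal (gauss_half A g) * indicator S (c + g) \<partial>lborel)"
      unfolding gauss_measure_def by (simp add: nn_integral_density)
    also have "\<dots> = (\<integral>\<^sup>+y. ennreal (gauss_half A (y - c)) * indicator S y \<partial>lborel)"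
      using nn_integral_real_affine[of "\<lambda>y. ennreal (gauss_half A (y - c)) * indicator S y" 1 c]
      by simp
    finally show "(\<integral>\<^sup>+g. indicator S (c + g) \<partial>gauss_measure A)
        = (\<integral>\<^sup>+y. ennreal (gauss_half A (y - c)) * indicator S y \<partial>lborel)" .
  qed
  also have "\<dots> = (\<integral>\<^sup>+y. \<integral>\<^sup>+c. ennreal (gauss_half A (y - c)) * indicator S y \<partial>\<mu> \<partial>lborel)"
    using Fubini'[of "\<lambda>y c. ennreal (gauss_half A (y - c)) * indicator S y"] by simp
  also have "\<dots> = (\<integral>\<^sup>+y. (\<integral>\<^sup>+c. ennreal (gauss_half A (y - c)) \<partial>\<mu>) * indicator S y \<partial>lborel)"
    by (rule nn_integral_cong, rule nn_integral_multc) measurable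
  also have "\<dots> = emeasure (density lborel (\<lambda>y. \<integral>\<^sup>+c. ennreal (gauss_half A (y - c)) \<partial>\<mu>)) S"
    by (subst emeasure_density) auto
  finally show "emeasure (\<mu> \<star> gauss_measure A) S
      = emeasure (density lborel (\<lambda>y. \<integral>\<^sup>+c. ennreal (gauss_half A (y - c)) \<partial>\<mu>)) S" .
qed simp

definition midpoint_law :: "real measure \<Rightarrow> real measure" where
  "midpoint_law \<mu> = distr (\<mu> \<Otimes>\<^sub>M \<mu>) borel (\<lambda>(a, b). (a + b) / 2)"

lemma sets_midpoint_law[simp, measurable_cong]: "sets (midpoint_law \<mu>) = sets borel"
  by (simp add: midpoint_law_def)

lemma prob_space_midpoint_law:
  assumes "prob_space \<mu>" and [measurable_cong]: "sets \<mu> = sets borel"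
  shows "prob_space (midpoint_law \<mu>)"
  unfolding midpoint_law_def
  by (rule prob_space.prob_space_distr[OF prob_space_pair[OF assms(1) assms(1)]]) measurable

lemma T_op_eq_convolution:
  assumes A: "A > 0" and P: "prob_space n" and Sn[measurable_cong]: "sets n = sets borel"
  shows "T_op A n = (midpoint_law n \<star> gauss_measure A)"
proof -
  interpret N: prob_space n by fact
  have "(\<integral>\<^sup>+c. ennreal (gauss_half A (y - c)) \<partial>midpoint_law n)
      = (\<integral>\<^sup>+ a. \<integral>\<^sup>+ b. ennreal (gauss_half A (y - (a + b) / 2)) \<partial>n \<partial>n)" for y
  proof -
    have "(\<integral>\<^sup>+c. ennreal (gauss_half A (y - c)) \<partial>midpoint_law n)
        = (\<integral>\<^sup>+z. ennreal (gauss_half A (y - (fst z + snd z) / 2)) \<partial>(n \<Otimes>\<^sub>M n))"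
      unfolding midpoint_law_def
      by (subst nn_integral_distr) (auto intro!: nn_integral_cong simp: split_beta)
    also have "\<dots> = (\<integral>\<^sup>+ a. \<integral>\<^sup>+ b. ennreal (gauss_half A (y - (a + b) / 2)) \<partial>n \<partial>n)"
      by (subst N.nn_integral_fst[symmetric]) auto
    finally show ?thesis .
  qed
  moreover have "finite_measure (midpoint_law n)"
    using prob_space_midpoint_law[OF P Sn] unfolding prob_space_def by blast
  ultimately show ?thesis
    unfolding T_op_def by (simp add: convolution_gauss_measure[OF A])
qed

lemma distr_pair_measure_maps:
  assumes "prob_space M" and "prob_space N"
    and [measurable]: "f \<in> measurable M S" "g \<in> measurable N T" "(\<lambda>(a, b). h a b) \<in> measurable (S \<Otimes>\<^sub>M T) X"
  shows "distr (M \<Otimes>\<^sub>M N) X (\<lambda>(x, y). h (f x) (g y))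
       = distr (distr M S f \<Otimes>\<^sub>M distr N T g) X (\<lambda>(a, b). h a b)"
proof -
  have "sigma_finite_measure (distr N T g)"
    by (rule prob_space_imp_sigma_finite, rule prob_space.prob_space_distr) (use assms in auto)
  then have "distr (distr M S f \<Otimes>\<^sub>M distr N T g) X (\<lambda>(a, b). h a b)
      = distr (distr (M \<Otimes>\<^sub>M N) (S \<Otimes>\<^sub>M T) (\<lambda>(x, y). (f x, g y))) X (\<lambda>(a, b). h a b)"
    by (subst pair_measure_distr) simp_all
  also have "\<dots> = distr (M \<Otimes>\<^sub>M N) X ((\<lambda>(a, b). h a b) \<circ> (\<lambda>(x, y). (f x, g y)))"
    by (rule distr_distr) measurable
  also have "\<dots> = distr (M \<Otimes>\<^sub>M N) X (\<lambda>(x, y). h (f x) (g y))"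
    by (rule distr_cong) auto
  finally show ?thesis by simp
qed

definition noisy_midpoint_coupling :: "real \<Rightarrow> (real \<times> real) measure \<Rightarrow> (real \<times> real) measure" where
  "noisy_midpoint_coupling A \<pi> =
     distr (distr (\<pi> \<Otimes>\<^sub>M \<pi>) (borel \<Otimes>\<^sub>M borel) (\<lambda>(p, q). ((fst p + fst q) / 2, (snd p + snd q) / 2))
              \<Otimes>\<^sub>M gauss_measure A)
       (borel \<Otimes>\<^sub>M borel) (\<lambda>(w, g). (fst w + g, snd w + g))"

lemma
  assumes "A > 0" and "prob_space \<pi>" and [measurable_cong]: "sets \<pi> = sets (borel \<Otimes>\<^sub>M borel)"
  shows prob_space_noisy_midpoint_coupling: "prob_space (noisy_midpoint_coupling A \<pi>)"
    and sets_noisy_midpoint_coupling: "sets (noisy_midpoint_coupling A \<pi>) = sets (borel \<Otimes>\<^sub>M borel)"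
  unfolding noisy_midpoint_coupling_def
  by (intro prob_space.prob_space_distr prob_space_pair prob_space_gauss_measure assms;
      measurable)+ simp

text \<open>\<open>sel\<close> is a coordinate projection; the hypotheses are all the linearity that is used.\<close>
lemma distr_noisy_midpoint_coupling:
  fixes sel :: "real \<times> real \<Rightarrow> real"
  assumes A: "A > 0" and P: "prob_space \<pi>" and [measurable_cong]: "sets \<pi> = sets (borel \<Otimes>\<^sub>M borel)"
    and [measurable]: "sel \<in> borel_measurable (borel \<Otimes>\<^sub>M borel)"
    and sel_shift: "\<And>a b g. sel (a + g, b + g) = sel (a, b) + g"
    and sel_midpoint: "\<And>p q. sel ((fst p + fst q) / 2, (snd p + snd q) / 2) = (sel p + sel q) / 2"
  shows "distr (noisy_midpoint_coupling A \<pi>) borel sel = (midpoint_law (distr \<pi> borel sel) \<star> gauss_measure A)"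
proof -
  let ?mid = "\<lambda>(p, q). ((fst p + fst q) / 2, (snd p + snd q) / 2)"
  let ?\<rho> = "distr (\<pi> \<Otimes>\<^sub>M \<pi>) (borel \<Otimes>\<^sub>M borel) ?mid"
  interpret G: prob_space "gauss_measure A" by (rule prob_space_gauss_measure[OF A])
  have P\<rho>: "prob_space ?\<rho>"
    by (rule prob_space.prob_space_distr[OF prob_space_pair[OF P P]]) measurable
  have "distr ?\<rho> borel sel = distr (\<pi> \<Otimes>\<^sub>M \<pi>) borel (sel \<circ> ?mid)"
    by (rule distr_distr) measurable
  also have "\<dots> = distr (\<pi> \<Otimes>\<^sub>M \<pi>) borel (\<lambda>(p, q). (\<lambda>a b. (a + b) / 2) (sel p) (sel q))"
    by (rule distr_cong) (auto simp: sel_midpoint split_beta)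
  also have "\<dots> = midpoint_law (distr \<pi> borel sel)"
    unfolding midpoint_law_def by (rule distr_pair_measure_maps[OF P P]) measurable
  finally have \<rho>_sel: "distr ?\<rho> borel sel = midpoint_law (distr \<pi> borel sel)" .
  have "distr (noisy_midpoint_coupling A \<pi>) borel sel
      = distr (?\<rho> \<Otimes>\<^sub>M gauss_measure A) borel (sel \<circ> (\<lambda>(w, g). (fst w + g, snd w + g)))"
    unfolding noisy_midpoint_coupling_def by (rule distr_distr) measurable
  also have "\<dots> = distr (?\<rho> \<Otimes>\<^sub>M gauss_measure A) borel (\<lambda>(w, g). (\<lambda>a b. a + b) (sel w) ((\<lambda>x. x) g))"
    by (rule distr_cong) (auto simp: sel_shift split_beta)
  also have "\<dots> = distr (distr ?\<rho> borel sel \<Otimes>\<^sub>M distr (gauss_measure A) borel (\<lambda>x. x)) borel (\<lambda>(a, b). a + b)"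
    by (rule distr_pair_measure_maps[OF P\<rho> G.prob_space_axioms]) measurable
  also have "\<dots> = (midpoint_law (distr \<pi> borel sel) \<star> gauss_measure A)"
    by (simp add: \<rho>_sel distr_id2 convolution_def)
  finally show ?thesis .
qed

lemma noisy_midpoint_coupling_in_couplings:
  assumes A: "A > 0" and C: "\<pi> \<in> couplings n m"
  shows "noisy_midpoint_coupling A \<pi> \<in> couplings (T_op A n) (T_op A m)"
proof -
  have P: "prob_space \<pi>" and S[measurable_cong]: "sets \<pi> = sets (borel \<Otimes>\<^sub>M borel)"
    and fst_\<pi>: "distr \<pi> borel fst = n" and snd_\<pi>: "distr \<pi> borel snd = m"
    using C unfolding couplings_def by auto
  have "prob_space n" "prob_space m"
    unfolding fst_\<pi>[symmetric] snd_\<pi>[symmetric] by (auto intro!: prob_space.prob_space_distr[OF P])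
  moreover have "sets n = sets borel" "sets m = sets borel"
    unfolding fst_\<pi>[symmetric] snd_\<pi>[symmetric] by simp_all
  ultimately show ?thesis
    unfolding couplings_def
    using distr_noisy_midpoint_coupling[OF A P S, of fst] distr_noisy_midpoint_coupling[OF A P S, of snd]
    by (simp add: fst_\<pi> snd_\<pi> T_op_eq_convolution A
        prob_space_noisy_midpoint_coupling[OF A P S] sets_noisy_midpoint_coupling[OF A P S])
qed

lemma nn_integral_noisy_midpoint_coupling:
  assumes A: "A > 0" and P: "prob_space \<pi>" and [measurable_cong]: "sets \<pi> = sets (borel \<Otimes>\<^sub>M borel)"
  shows "(\<integral>\<^sup>+p. ennreal ((fst p - snd p) ^ 4) \<partial>noisy_midpoint_coupling A \<pi>)
       = (\<integral>\<^sup>+p. \<integral>\<^sup>+q. ennreal (((fst p - snd p + (fst q - snd q)) / 2) ^ 4) \<partial>\<pi> \<partial>\<pi>)"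
proof -
  interpret P: prob_space \<pi> by fact
  interpret G: prob_space "gauss_measure A" by (rule prob_space_gauss_measure[OF A])
  let ?\<rho> = "distr (\<pi> \<Otimes>\<^sub>M \<pi>) (borel \<Otimes>\<^sub>M borel) (\<lambda>(p, q). ((fst p + fst q) / 2, (snd p + snd q) / 2))"
  interpret R: prob_space ?\<rho>
    by (rule prob_space.prob_space_distr[OF prob_space_pair[OF P P]]) measurable
  have "(\<integral>\<^sup>+p. ennreal ((fst p - snd p) ^ 4) \<partial>noisy_midpoint_coupling A \<pi>)
      = (\<integral>\<^sup>+z. ennreal ((fst (fst z) - snd (fst z)) ^ 4) \<partial>(?\<rho> \<Otimes>\<^sub>M gauss_measure A))"
    unfolding noisy_midpoint_coupling_def
    by (subst nn_integral_distr) (auto intro!: nn_integral_cong simp: split_beta)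
  also have "\<dots> = (\<integral>\<^sup>+w. ennreal ((fst w - snd w) ^ 4) \<partial>?\<rho>)"
    by (subst G.nn_integral_fst[symmetric]) (auto simp: G.emeasure_space_1)
  also have "\<dots> = (\<integral>\<^sup>+z. ennreal (((fst (fst z) - snd (fst z) + (fst (snd z) - snd (snd z))) / 2) ^ 4) \<partial>(\<pi> \<Otimes>\<^sub>M \<pi>))"
    by (subst nn_integral_distr)
       (auto intro!: nn_integral_cong simp: split_beta diff_divide_distrib add_divide_distrib algebra_simps)
  also have "\<dots> = (\<integral>\<^sup>+p. \<integral>\<^sup>+q. ennreal (((fst p - snd p + (fst q - snd q)) / 2) ^ 4) \<partial>\<pi> \<partial>\<pi>)"
    by (subst P.nn_integral_fst[symmetric]) auto
  finally show ?thesis .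
qed

lemma abs_power_le_one_plus_power4:
  fixes t :: real assumes "k \<le> 4" shows "\<bar>t\<bar> ^ k \<le> 1 + t ^ 4"
proof (cases "\<bar>t\<bar> \<le> 1")
  case True
  then have "\<bar>t\<bar> ^ k \<le> 1" by (simp add: power_le_one)
  moreover have "t ^ 4 \<ge> 0" by simp
  ultimately show ?thesis by linarith
next
  case False
  then have "\<bar>t\<bar> ^ k \<le> \<bar>t\<bar> ^ 4" using assms by (intro power_increasing) auto
  then show ?thesis by (simp add: power_even_abs)
qed

lemma integrable_power_le_4:
  fixes f :: "'a \<Rightarrow> real"
  assumes "finite_measure M" and [measurable]: "f \<in> borel_measurable M"
    and "integrable M (\<lambda>x. f x ^ 4)" and "k \<le> 4"
  shows "integrable M (\<lambda>x. f x ^ k)"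
proof (rule Bochner_Integration.integrable_bound[where f = "\<lambda>x. 1 + f x ^ 4"])
  interpret finite_measure M by fact
  show "integrable M (\<lambda>x. 1 + f x ^ 4)" using assms(3) by simp
  show "AE x in M. norm (f x ^ k) \<le> norm (1 + f x ^ 4)"
    using abs_power_le_one_plus_power4[OF \<open>k \<le> 4\<close>] by (auto simp: power_abs)
qed measurable

lemma power4_diff_le: "((a :: real) - b) ^ 4 \<le> 8 * (a ^ 4 + b ^ 4)"
proof -
  have "(a - b) ^ 2 \<le> 2 * (a ^ 2 + b ^ 2)"
    using zero_le_power2[of "a + b"] by (simp add: power2_eq_square algebra_simps)
  then have "((a - b) ^ 2) ^ 2 \<le> (2 * (a ^ 2 + b ^ 2)) ^ 2" by (intro power_mono) auto
  also have "\<dots> \<le> 8 * (a ^ 4 + b ^ 4)"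
    using zero_le_power2[of "a ^ 2 - b ^ 2"] by (simp add: power2_eq_square algebra_simps eval_nat_numeral)
  finally show ?thesis by simp
qed

lemma (in prob_space) power2_integral_le_integral_power2:
  fixes f :: "'a \<Rightarrow> real"
  assumes "integrable M f" and "integrable M (\<lambda>x. f x ^ 2)"
  shows "(\<integral>x. f x \<partial>M) ^ 2 \<le> (\<integral>x. f x ^ 2 \<partial>M)"
  using variance_positive[of f] by (simp add: variance_eq assms)

lemma nn_integral_midpoint_power4:
  fixes D :: "'a \<Rightarrow> real"
  assumes "prob_space M" and D[measurable]: "D \<in> borel_measurable M"
    and "integrable M (\<lambda>x. D x ^ 4)" and mean_zero: "(\<integral>x. D x \<partial>M) = 0"
  shows "(\<integral>\<^sup>+x. \<integral>\<^sup>+y. ennreal (((D x + D y) / 2) ^ 4) \<partial>M \<partial>M)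
       = ennreal ((\<integral>x. D x ^ 4 \<partial>M) / 8 + 3 / 8 * (\<integral>x. D x ^ 2 \<partial>M) ^ 2)"
proof -
  interpret prob_space M by fact
  have I: "integrable M (\<lambda>x. D x ^ k)" if "k \<le> 4" for k
    by (rule integrable_power_le_4[OF finite_measure_axioms D]) (use assms that in auto)
  note I1 = I[of 1, simplified] and I2 = I[of 2] and I3 = I[of 3] and I4 = I[of 4]
  define E2 where "E2 = (\<integral>x. D x ^ 2 \<partial>M)"
  define E3 where "E3 = (\<integral>x. D x ^ 3 \<partial>M)"
  define E4 where "E4 = (\<integral>x. D x ^ 4 \<partial>M)"
  have expand: "((a + d) / 2) ^ 4 = a ^ 4 / 16 + (a ^ 3 / 4) * d + (3 * a ^ 2 / 8) * d ^ 2
                  + (a / 4) * d ^ 3 + (1 / 16) * d ^ 4" for a d :: real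
    by (simp add: eval_nat_numeral field_simps)
  define Q where "Q a = a ^ 4 / 16 + 3 * a ^ 2 / 8 * E2 + a / 4 * E3 + E4 / 16" for a
  have integrable_inner: "integrable M (\<lambda>y. ((a + D y) / 2) ^ 4)" for a
    unfolding expand using I1 I2 I3 I4 by simp
  have integral_inner: "(\<integral>y. ((a + D y) / 2) ^ 4 \<partial>M) = Q a" for a
    unfolding expand Q_def E2_def E3_def E4_def using I1 I2 I3 I4 mean_zero by (simp add: prob_space)
  have "Q a \<ge> 0" for a
    unfolding integral_inner[symmetric] by (rule integral_nonneg_AE) simp
  moreover have "(\<integral>\<^sup>+y. ennreal (((a + D y) / 2) ^ 4) \<partial>M) = ennreal (Q a)" for a
    using integrable_inner integral_inner by (subst nn_integral_eq_integral) auto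
  moreover have "integrable M (\<lambda>x. Q (D x))" and "(\<integral>x. Q (D x) \<partial>M) = E4 / 8 + 3 / 8 * E2 ^ 2"
    unfolding Q_def E2_def E4_def using I1 I2 I3 I4 mean_zero by (simp_all add: prob_space power2_eq_square)
  ultimately show ?thesis
    unfolding E2_def[symmetric] E4_def[symmetric] by (simp add: nn_integral_eq_integral)
qed

lemma midpoint_fourth_moment_le:
  fixes D :: "'a \<Rightarrow> real"
  assumes "prob_space M" and D[measurable]: "D \<in> borel_measurable M"
    and I4: "integrable M (\<lambda>x. D x ^ 4)" and "(\<integral>x. D x \<partial>M) = 0"
  shows "2 * (\<integral>\<^sup>+x. \<integral>\<^sup>+y. ennreal (((D x + D y) / 2) ^ 4) \<partial>M \<partial>M) \<le> (\<integral>\<^sup>+x. ennreal (D x ^ 4) \<partial>M)"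
proof -
  interpret prob_space M by fact
  define E2 where "E2 = (\<integral>x. D x ^ 2 \<partial>M)"
  define E4 where "E4 = (\<integral>x. D x ^ 4 \<partial>M)"
  have "E2 ^ 2 \<le> E4"
    unfolding E2_def E4_def using power2_integral_le_integral_power2[of "\<lambda>x. D x ^ 2"]
    by (simp add: integrable_power_le_4[OF finite_measure_axioms D I4] flip: power_mult)
  then have "0 \<le> E4 / 8 + 3 / 8 * E2 ^ 2"
    using zero_le_power2[of E2] by linarith
  then have "2 * ennreal (E4 / 8 + 3 / 8 * E2 ^ 2) = ennreal (2 * (E4 / 8 + 3 / 8 * E2 ^ 2))"
    by (subst ennreal_mult) auto
  also have "\<dots> \<le> ennreal E4"
    using \<open>E2 ^ 2 \<le> E4\<close> by (intro ennreal_leI) (simp add: field_simps)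
  also have "ennreal E4 = (\<integral>\<^sup>+x. ennreal (D x ^ 4) \<partial>M)"
    unfolding E4_def using I4 by (subst nn_integral_eq_integral) auto
  finally show ?thesis
    unfolding nn_integral_midpoint_power4[OF assms] E2_def E4_def .
qed

lemma coupling_moments:
  assumes C: "\<pi> \<in> couplings n m"
    and "integrable n (\<lambda>y. y ^ 4)" and "integrable m (\<lambda>y. y ^ 4)"
  shows "integrable \<pi> (\<lambda>p. (fst p - snd p) ^ 4)"
    and "(\<integral>p. fst p - snd p \<partial>\<pi>) = (\<integral>y. y \<partial>n) - (\<integral>y. y \<partial>m)"
proof -
  have P: "prob_space \<pi>" and [measurable_cong]: "sets \<pi> = sets (borel \<Otimes>\<^sub>M borel)"
    and fst_\<pi>: "distr \<pi> borel fst = n" and snd_\<pi>: "distr \<pi> borel snd = m"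
    using C unfolding couplings_def by auto
  interpret prob_space \<pi> by fact
  have fst4: "integrable \<pi> (\<lambda>p. fst p ^ 4)" and snd4: "integrable \<pi> (\<lambda>p. snd p ^ 4)"
    using assms(2,3) unfolding fst_\<pi>[symmetric] snd_\<pi>[symmetric] by (simp_all add: integrable_distr_eq)
  show "integrable \<pi> (\<lambda>p. (fst p - snd p) ^ 4)"
  proof (rule Bochner_Integration.integrable_bound[where f = "\<lambda>p. 8 * (fst p ^ 4 + snd p ^ 4)"])
    show "integrable \<pi> (\<lambda>p. 8 * (fst p ^ 4 + snd p ^ 4))" using fst4 snd4 by simp
    show "AE p in \<pi>. norm ((fst p - snd p) ^ 4) \<le> norm (8 * (fst p ^ 4 + snd p ^ 4))"
      using power4_diff_le by (auto simp: abs_of_nonneg add_nonneg_nonneg)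
  qed measurable
  have "integrable \<pi> fst" "integrable \<pi> snd"
    using integrable_power_le_4[OF finite_measure_axioms _ fst4, of 1]
          integrable_power_le_4[OF finite_measure_axioms _ snd4, of 1] by simp_all
  then show "(\<integral>p. fst p - snd p \<partial>\<pi>) = (\<integral>y. y \<partial>n) - (\<integral>y. y \<partial>m)"
    unfolding fst_\<pi>[symmetric] snd_\<pi>[symmetric] by (simp add: integral_distr)
qed

lemma W4_cost_T_op_le:
  assumes A: "A > 0" and C: "\<pi> \<in> couplings n m"
    and In: "integrable n (\<lambda>y. y ^ 4)" and Im: "integrable m (\<lambda>y. y ^ 4)"
    and mean: "(\<integral>y. y \<partial>n) = (\<integral>y. y \<partial>m)"
  shows "2 * W4_cost (T_op A n) (T_op A m) \<le> (\<integral>\<^sup>+p. ennreal ((fst p - snd p) ^ 4) \<partial>\<pi>)"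
proof -
  have P: "prob_space \<pi>" and S[measurable_cong]: "sets \<pi> = sets (borel \<Otimes>\<^sub>M borel)"
    using C unfolding couplings_def by auto
  have "W4_cost (T_op A n) (T_op A m) \<le> (\<integral>\<^sup>+p. ennreal ((fst p - snd p) ^ 4) \<partial>noisy_midpoint_coupling A \<pi>)"
    unfolding W4_cost_def by (rule INF_lower[OF noisy_midpoint_coupling_in_couplings[OF A C]])
  then have "2 * W4_cost (T_op A n) (T_op A m)
      \<le> 2 * (\<integral>\<^sup>+p. \<integral>\<^sup>+q. ennreal (((fst p - snd p + (fst q - snd q)) / 2) ^ 4) \<partial>\<pi> \<partial>\<pi>)"
    unfolding nn_integral_noisy_midpoint_coupling[OF A P S] by (rule mult_left_mono) simp
  also have "\<dots> \<le> (\<integral>\<^sup>+p. ennreal ((fst p - snd p) ^ 4) \<partial>\<pi>)"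
    using coupling_moments[OF C In Im] mean by (intro midpoint_fourth_moment_le[OF P]) auto
  finally show ?thesis .
qed

lemma product_in_couplings:
  assumes "prob_space n" and Sn: "sets n = sets borel" and "prob_space m" and Sm: "sets m = sets borel"
  shows "n \<Otimes>\<^sub>M m \<in> couplings n m"
proof -
  interpret N: prob_space n by fact
  interpret M: prob_space m by fact
  interpret pair_sigma_finite n m ..
  have "distr (n \<Otimes>\<^sub>M m) borel fst = distr (n \<Otimes>\<^sub>M m) n fst"
    using Sn by (intro distr_cong) simp_all
  then have fst: "distr (n \<Otimes>\<^sub>M m) borel fst = n"
    by (simp add: M.distr_pair_fst)
  have "distr (n \<Otimes>\<^sub>M m) borel snd = distr (distr (m \<Otimes>\<^sub>M n) (n \<Otimes>\<^sub>M m) (\<lambda>(x, y). (y, x))) borel snd"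
    by (simp flip: distr_pair_swap)
  also have "\<dots> = distr (m \<Otimes>\<^sub>M n) borel (snd \<circ> (\<lambda>(x, y). (y, x)))"
    by (rule distr_distr) (simp_all add: measurable_pair_swap' Sm cong: measurable_cong_sets)
  also have "\<dots> = distr (m \<Otimes>\<^sub>M n) m fst"
    using Sm by (intro distr_cong) auto
  finally have snd: "distr (n \<Otimes>\<^sub>M m) borel snd = m"
    by (simp add: N.distr_pair_fst)
  show ?thesis
    unfolding couplings_def
    using prob_space_pair[OF assms(1,3)] sets_pair_measure_cong[OF Sn Sm] fst snd by blast
qed

lemma W4_cost_finite:
  assumes "prob_space n" "sets n = sets borel" "prob_space m" "sets m = sets borel"
    and "integrable n (\<lambda>y. y ^ 4)" "integrable m (\<lambda>y. y ^ 4)"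
  shows "W4_cost n m < \<top>"
proof -
  have C: "n \<Otimes>\<^sub>M m \<in> couplings n m" by (rule product_in_couplings) fact+
  have "W4_cost n m \<le> (\<integral>\<^sup>+p. ennreal ((fst p - snd p) ^ 4) \<partial>(n \<Otimes>\<^sub>M m))"
    unfolding W4_cost_def using C by (rule INF_lower)
  also have "\<dots> = ennreal (\<integral>p. (fst p - snd p) ^ 4 \<partial>(n \<Otimes>\<^sub>M m))"
    using coupling_moments(1)[OF C assms(5,6)] by (subst nn_integral_eq_integral) auto
  finally show ?thesis using order_le_less_trans by fastforce
qed

theorem corollary1:
  fixes A :: real and n m :: "real measure"
  assumes "A > 0"
    and "prob_space n" and "sets n = sets borel"
    and "prob_space m" and "sets m = sets borel"
    and "integrable n (\<lambda>y. y ^ 4)"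
    and "integrable m (\<lambda>y. y ^ 4)"
    and "(\<integral>y. y \<partial>n) = (\<integral>y. y \<partial>m)"
  shows "W4 (T_op A n) (T_op A m) \<le> 1 / 2 powr (1/4) * W4 n m"
proof -
  define a where "a = W4_cost n m"
  define b where "b = W4_cost (T_op A n) (T_op A m)"
  have "a < \<top>" unfolding a_def by (rule W4_cost_finite) fact+
  moreover have "2 * b \<le> a"
    unfolding a_def b_def W4_cost_def[of n m]
  proof (rule INF_greatest)
    fix \<pi> assume "\<pi> \<in> couplings n m"
    then show "2 * W4_cost (T_op A n) (T_op A m) \<le> (\<integral>\<^sup>+p. ennreal ((fst p - snd p) ^ 4) \<partial>\<pi>)"
      using assms by (intro W4_cost_T_op_le) auto
  qed
  ultimately have "2 * enn2real b \<le> enn2real a"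
    using enn2real_mono[of "2 * b" a] by (simp add: enn2real_mult)
  then have "W4 (T_op A n) (T_op A m) \<le> (enn2real a / 2) powr (1/4)"
    unfolding W4_def b_def by (intro powr_mono2) auto
  also have "\<dots> = 1 / 2 powr (1/4) * W4 n m"
    unfolding W4_def a_def by (simp add: powr_divide)
  finally show ?thesis .
qed

end
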